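(* Let $(A,G)$ be an admissible pair with $A\in M_{Q_0}(\mathbb Z)$, and assume that $G$ has at most one non-trivial orbit in $Q_0$. Then $(A,G)$ is a stable admissible pair.
   Context: $Q_0$ finite; $A=(a_{ij})$ skew-symmetrizable ($DA$ skew-symmetric for a positive integer diagonal $D$). Mutation $\mu_k(B)=(b'_{ij})$: $b'_{ij}=-b_{ij}$ if $k\in\{i,j\}$, else $b_{ij}+\tfrac12(|b_{ik}|b_{kj}+b_{ik}|b_{kj}|)$. A permutation $g$ of $Q_0$ is an automorphism of $B$ if $b_{gi,gj}=b_{ij}$; a group $G$ of automorphisms of $B$ is admissible ($(B,G)$ an admissible pair) if for distinct $i,j$ in the same $G$-orbit there is no path of length $1$ or $2$ from $i$ to $j$ in the quiver of $B$ ($b_{ij}\le0$ and no $k$ with $b_{ik}>0$, $b_{kj}>0$). For a $G$-orbit $\mathbf i$, $\mu^G_{\mathbf i}=\prod_{j\in\mathbf i}\mu_j$. $(A,G)$ is stable if for every finite sequence of $G$-orbits $\mathbf i_1,\ldots,\mathbf i_n$, each pair $(\mu^G_{\mathbf i_m}\circ\cdots\circ\mu^G_{\mathbf i_1}(A),G)$, $1\le m\le n$, is admissible. *)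

theory Defs
  imports "HOL-Combinatorics.Permutations"
begin

text \<open>Exchange matrices are integer matrices indexed by the finite vertex set Q0,
  represented as functions; entries outside Q0 are irrelevant.\<close>

type_synonym 'a mat = "'a \<Rightarrow> 'a \<Rightarrow> int"

definition skew_symmetrizable :: "'a set \<Rightarrow> 'a mat \<Rightarrow> bool" where
  "skew_symmetrizable Q0 A \<longleftrightarrow>
     (\<exists>D :: 'a \<Rightarrow> int. (\<forall>i\<in>Q0. D i > 0) \<and>
        (\<forall>i\<in>Q0. \<forall>j\<in>Q0. D i * A i j = - (D j * A j i)))"

text \<open>Matrix mutation at k. The quantity |b_ik| b_kj + b_ik |b_kj| is always even.\<close>
definition mut :: "'a \<Rightarrow> 'a mat \<Rightarrow> 'a mat" where
  "mut k B = (\<lambda>i j. if i = k \<or> j = k then - B i j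
      else B i j + (\<bar>B i k\<bar> * B k j + B i k * \<bar>B k j\<bar>) div 2)"

definition is_automorphism :: "'a set \<Rightarrow> 'a mat \<Rightarrow> ('a \<Rightarrow> 'a) \<Rightarrow> bool" where
  "is_automorphism Q0 B g \<longleftrightarrow> g permutes Q0 \<and> (\<forall>i\<in>Q0. \<forall>j\<in>Q0. B (g i) (g j) = B i j)"

definition perm_group :: "'a set \<Rightarrow> ('a \<Rightarrow> 'a) set \<Rightarrow> bool" where
  "perm_group Q0 G \<longleftrightarrow> id \<in> G \<and> (\<forall>g\<in>G. g permutes Q0) \<and>
     (\<forall>g\<in>G. \<forall>h\<in>G. g \<circ> h \<in> G) \<and> (\<forall>g\<in>G. inv g \<in> G)"

definition orbit :: "('a \<Rightarrow> 'a) set \<Rightarrow> 'a \<Rightarrow> 'a set" where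
  "orbit G i = (\<lambda>g. g i) ` G"

definition admissible :: "'a set \<Rightarrow> 'a mat \<Rightarrow> ('a \<Rightarrow> 'a) set \<Rightarrow> bool" where
  "admissible Q0 B G \<longleftrightarrow>
     (\<forall>g\<in>G. is_automorphism Q0 B g) \<and>
     (\<forall>i\<in>Q0. \<forall>j\<in>orbit G i. i \<noteq> j \<longrightarrow>
        B i j \<le> 0 \<and> \<not> (\<exists>k\<in>Q0. B i k > 0 \<and> B k j > 0))"

text \<open>Orbit mutation: product of mutations at all vertices of the orbit
  (performed in increasing order; the order is irrelevant for admissible pairs).\<close>
definition orbit_mut :: "'a::linorder set \<Rightarrow> 'a mat \<Rightarrow> 'a mat" where
  "orbit_mut I B = fold mut (sorted_list_of_set I) B"

definition orbit_mut_seq :: "('a::linorder \<Rightarrow> 'a) set \<Rightarrow> 'a list \<Rightarrow> 'a mat \<Rightarrow> 'a mat" where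
  "orbit_mut_seq G is B = fold (\<lambda>i C. orbit_mut (orbit G i) C) is B"

definition stable :: "'a::linorder set \<Rightarrow> 'a mat \<Rightarrow> ('a \<Rightarrow> 'a) set \<Rightarrow> bool" where
  "stable Q0 A G \<longleftrightarrow>
     (\<forall>is. set is \<subseteq> Q0 \<longrightarrow> admissible Q0 (orbit_mut_seq G is A) G)"

end

theory Submission
  imports Defs
begin

(* Fix a skew-symmetrizer D. As D is positive, b_ij and b_ji always have opposite signs, so
   admissibility of a skew-symmetrizable B forces B to vanish on every G-orbit. Conversely, if
   at most one orbit O is nontrivial, every vertex l outside O is fixed by G, hence b_jl = b_il
   for i, j in O; a path i -> l -> j would then make both b_jl and b_lj positive. So vanishing
   on orbits plus G-invariance already gives admissibility, and it suffices that orbit mutation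
   preserves these two properties together with the skew-symmetrizer D. Since B vanishes on the
   mutated orbit S, the mutations at its vertices do not interact and add up to
   b'_ij = b_ij + sum over l in S of the mutation terms of (b_il, b_lj) for i, j outside S; for
   i, j in a common orbit the fixed-point argument gives b_il = b_jl, of sign opposite to b_lj,
   so every such term vanishes. *)

definition mutation_term :: "int \<Rightarrow> int \<Rightarrow> int" where
  "mutation_term a b = (\<bar>a\<bar> * b + a * \<bar>b\<bar>) div 2"

lemma mutation_term_sgn: "mutation_term a b = (if sgn a = sgn b then sgn a * (a * b) else 0)"
  unfolding mutation_term_def by (auto simp: sgn_if abs_if)

lemma mutation_term_0 [simp]: "mutation_term a 0 = 0" "mutation_term 0 b = 0"
  by (simp_all add: mutation_term_def)

lemma mutation_term_opposite_sgn: "sgn b = - sgn a \<Longrightarrow> mutation_term a b = 0"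
  by (auto simp: mutation_term_sgn)

lemma mut_apply:
  "mut k B i j = (if i = k \<or> j = k then - B i j else B i j + mutation_term (B i k) (B k j))"
  by (simp add: mut_def mutation_term_def)

definition skew_symmetrizer :: "'a set \<Rightarrow> ('a \<Rightarrow> int) \<Rightarrow> 'a mat \<Rightarrow> bool" where
  "skew_symmetrizer Q0 D B \<longleftrightarrow>
     (\<forall>i\<in>Q0. D i > 0) \<and> (\<forall>i\<in>Q0. \<forall>j\<in>Q0. D i * B i j = - (D j * B j i))"

lemma skew_symmetrizable_iff: "skew_symmetrizable Q0 B \<longleftrightarrow> (\<exists>D. skew_symmetrizer Q0 D B)"
  by (simp add: skew_symmetrizable_def skew_symmetrizer_def)

lemma sgn_opposite_if_weighted_opposite:
  fixes a b x y :: int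
  assumes "x > 0" "y > 0" "x * a = - (y * b)"
  shows "sgn b = - sgn a"
proof -
  have "sgn a = sgn (x * a)" using \<open>x > 0\<close> by (simp add: sgn_mult)
  also have "\<dots> = - sgn (y * b)" by (simp only: assms(3) sgn_minus)
  also have "\<dots> = - sgn b" using \<open>y > 0\<close> by (simp add: sgn_mult)
  finally show ?thesis by simp
qed

lemma mutation_term_weighted_opposite:
  fixes a b c d x y z :: int
  assumes pos: "x > 0" "y > 0" "z > 0" and ad: "x * a = - (z * d)" and bc: "z * b = - (y * c)"
  shows "x * mutation_term a b = - (y * mutation_term c d)"
proof -
  have "z * (x * (a * b)) = (x * a) * (z * b)" by (simp only: mult_ac)
  also have "\<dots> = (z * d) * (y * c)" by (simp add: ad bc)
  also have "\<dots> = z * (y * (c * d))" by (simp only: mult_ac)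
  finally have prod: "x * (a * b) = y * (c * d)" using \<open>z > 0\<close> by simp
  have sgn_d: "sgn d = - sgn a" and sgn_c: "sgn c = - sgn b"
    using sgn_opposite_if_weighted_opposite pos ad bc by blast+
  show ?thesis
  proof (cases "sgn a = sgn b")
    case True
    then have "x * mutation_term a b = sgn a * (x * (a * b))"
      by (simp add: mutation_term_sgn mult_ac)
    also have "\<dots> = sgn a * (y * (c * d))" by (simp only: prod)
    also have "\<dots> = - (y * mutation_term c d)"
      using True sgn_c sgn_d by (simp add: mutation_term_sgn mult_ac)
    finally show ?thesis .
  next
    case False
    then show ?thesis using sgn_c sgn_d by (simp add: mutation_term_sgn)
  qed
qed

lemma skew_symmetrizer_sgn:
  assumes "skew_symmetrizer Q0 D B" "i \<in> Q0" "j \<in> Q0"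
  shows "sgn (B j i) = - sgn (B i j)"
proof -
  have "D i > 0" "D j > 0" "D i * B i j = - (D j * B j i)"
    using assms unfolding skew_symmetrizer_def by blast+
  then show ?thesis by (rule sgn_opposite_if_weighted_opposite)
qed

lemma skew_symmetrizer_mut:
  assumes D: "skew_symmetrizer Q0 D B" and k: "k \<in> Q0"
  shows "skew_symmetrizer Q0 D (mut k B)"
proof -
  have pos: "\<forall>x\<in>Q0. D x > 0" using D unfolding skew_symmetrizer_def by blast
  have skew: "D x * B x y = - (D y * B y x)" if "x \<in> Q0" "y \<in> Q0" for x y
    using D that unfolding skew_symmetrizer_def by blast
  have "D i * mut k B i j = - (D j * mut k B j i)" if i: "i \<in> Q0" and j: "j \<in> Q0" for i j
  proof (cases "i = k \<or> j = k")
    case True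
    then have "mut k B i j = - B i j" "mut k B j i = - B j i" by (auto simp: mut_apply)
    then show ?thesis using skew[OF i j] by simp
  next
    case False
    then have "mut k B i j = B i j + mutation_term (B i k) (B k j)"
      "mut k B j i = B j i + mutation_term (B j k) (B k i)" by (auto simp: mut_apply)
    moreover have "D i * mutation_term (B i k) (B k j) = - (D j * mutation_term (B j k) (B k i))"
      using mutation_term_weighted_opposite[OF _ _ _ skew[OF i k] skew[OF k j]] pos i j k by blast
    ultimately show ?thesis using skew[OF i j] by (simp add: distrib_left)
  qed
  with pos show ?thesis unfolding skew_symmetrizer_def by blast
qed

lemma fold_mut_apply:
  assumes "distinct ks" "\<forall>k\<in>set ks. \<forall>l\<in>set ks. B k l = 0"
  shows "fold mut ks B i j = (if i \<in> set ks \<or> j \<in> set ks then - B i j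
           else B i j + (\<Sum>l\<in>set ks. mutation_term (B i l) (B l j)))"
  using assms
proof (induction ks arbitrary: B)
  case Nil
  then show ?case by simp
next
  case (Cons k ks)
  let ?C = "mut k B"
  have k: "k \<notin> set ks" using Cons.prems by simp
  have null: "B x y = 0" if "x \<in> set (k # ks)" "y \<in> set (k # ks)" for x y
    using Cons.prems that by blast
  have "\<forall>x\<in>set ks. \<forall>y\<in>set ks. ?C x y = 0" using null k by (auto simp: mut_apply)
  then have IH: "fold mut ks ?C i j = (if i \<in> set ks \<or> j \<in> set ks then - ?C i j
           else ?C i j + (\<Sum>l\<in>set ks. mutation_term (?C i l) (?C l j)))"
    using Cons by simp
  consider "i \<in> set ks \<or> j \<in> set ks" | "i = k \<or> j = k" "i \<notin> set ks" "j \<notin> set ks"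
    | "i \<notin> set (k # ks)" "j \<notin> set (k # ks)"
    by auto
  then show ?case
  proof cases
    case 1
    then have "?C i j = B i j" using null k by (auto simp: mut_apply)
    then show ?thesis using IH 1 by auto
  next
    case 2
    then have "?C i l = 0 \<or> ?C l j = 0" if "l \<in> set ks" for l
      using null k that by (auto simp: mut_apply)
    then have "(\<Sum>l\<in>set ks. mutation_term (?C i l) (?C l j)) = 0"
      by (metis (no_types, lifting) mutation_term_0 sum.neutral)
    moreover have "?C i j = - B i j" using 2 by (auto simp: mut_apply)
    ultimately show ?thesis using IH 2 by auto
  next
    case 3
    then have "?C i l = B i l" "?C l j = B l j" if "l \<in> set ks" for l
      using null k that by (auto simp: mut_apply)
    then have "(\<Sum>l\<in>set ks. mutation_term (?C i l) (?C l j))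
        = (\<Sum>l\<in>set ks. mutation_term (B i l) (B l j))"
      by simp
    moreover have "?C i j = B i j + mutation_term (B i k) (B k j)" using 3 by (simp add: mut_apply)
    ultimately show ?thesis using IH 3 k by simp
  qed
qed

lemma orbit_mut_apply:
  assumes "finite S" "\<forall>k\<in>S. \<forall>l\<in>S. B k l = 0"
  shows "orbit_mut S B i j = (if i \<in> S \<or> j \<in> S then - B i j
           else B i j + (\<Sum>l\<in>S. mutation_term (B i l) (B l j)))"
  using fold_mut_apply[of "sorted_list_of_set S" B] assms by (simp add: orbit_mut_def)

lemma skew_symmetrizer_orbit_mut:
  assumes "skew_symmetrizer Q0 D B" "finite S" "S \<subseteq> Q0"
  shows "skew_symmetrizer Q0 D (orbit_mut S B)"
proof -
  have "skew_symmetrizer Q0 D (fold mut ks B)" if "set ks \<subseteq> Q0" for ks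
    using that assms(1)
    by (induction ks arbitrary: B) (auto intro: skew_symmetrizer_mut)
  then show ?thesis using assms(2,3) by (simp add: orbit_mut_def)
qed

lemma is_automorphism_orbit_mut:
  assumes g: "is_automorphism Q0 B g" and S: "finite S" "S \<subseteq> Q0" "g ` S = S"
    and null: "\<forall>k\<in>S. \<forall>l\<in>S. B k l = 0"
  shows "is_automorphism Q0 (orbit_mut S B) g"
proof -
  have perm: "g permutes Q0" and inv: "\<And>i j. i \<in> Q0 \<Longrightarrow> j \<in> Q0 \<Longrightarrow> B (g i) (g j) = B i j"
    using g by (auto simp: is_automorphism_def)
  have "inj g" using perm by (rule permutes_inj)
  then have gS: "g x \<in> S \<longleftrightarrow> x \<in> S" for x
    using S(3) by (metis inj_image_mem_iff)
  have "inj_on g S" using \<open>inj g\<close> by (metis inj_on_subset subset_UNIV)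
  have "(\<Sum>l\<in>S. mutation_term (B (g i) l) (B l (g j))) = (\<Sum>l\<in>S. mutation_term (B i l) (B l j))"
    if "i \<in> Q0" "j \<in> Q0" for i j
  proof -
    have "(\<Sum>l\<in>S. mutation_term (B (g i) l) (B l (g j)))
        = (\<Sum>l\<in>g ` S. mutation_term (B (g i) l) (B l (g j)))"
      using S(3) by simp
    also have "\<dots> = (\<Sum>l\<in>S. mutation_term (B (g i) (g l)) (B (g l) (g j)))"
      using \<open>inj_on g S\<close> by (simp add: sum.reindex)
    also have "\<dots> = (\<Sum>l\<in>S. mutation_term (B i l) (B l j))"
      using inv that S(2) by (intro sum.cong) auto
    finally show ?thesis .
  qed
  then show ?thesis
    using perm inv gS orbit_mut_apply[OF S(1) null]
    by (simp add: is_automorphism_def)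
qed

lemma perm_group_permutes: "perm_group Q0 G \<Longrightarrow> g \<in> G \<Longrightarrow> g permutes Q0"
  by (simp add: perm_group_def)

lemma orbit_subset:
  assumes G: "perm_group Q0 G" and i: "i \<in> Q0"
  shows "orbit G i \<subseteq> Q0"
proof
  fix x assume "x \<in> orbit G i"
  then obtain g where g: "g \<in> G" "x = g i" unfolding orbit_def by blast
  show "x \<in> Q0" using permutes_in_image[OF perm_group_permutes[OF G g(1)]] g(2) i by simp
qed

lemma orbit_self:
  assumes "perm_group Q0 G"
  shows "i \<in> orbit G i"
proof -
  have "id \<in> G" using assms by (simp add: perm_group_def)
  then show ?thesis unfolding orbit_def by (rule image_eqI[where x = id, rotated]) simp
qed

lemma orbit_sym:
  assumes G: "perm_group Q0 G" and "j \<in> orbit G i"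
  shows "i \<in> orbit G j"
proof -
  obtain g where g: "g \<in> G" "j = g i" using assms(2) unfolding orbit_def by blast
  have "inv g \<in> G" using G g by (simp add: perm_group_def)
  moreover have "inv g j = i"
    using g permutes_inverses(2)[OF perm_group_permutes[OF G g(1)]] by simp
  ultimately show ?thesis unfolding orbit_def by force
qed

lemma orbit_subset_of_mem:
  assumes G: "perm_group Q0 G" and "j \<in> orbit G i"
  shows "orbit G j \<subseteq> orbit G i"
proof
  fix x assume "x \<in> orbit G j"
  then obtain h where h: "h \<in> G" "x = h j" unfolding orbit_def by blast
  obtain g where g: "g \<in> G" "j = g i" using assms(2) unfolding orbit_def by blast
  have "h \<circ> g \<in> G" using G g h by (simp add: perm_group_def)
  moreover have "x = (h \<circ> g) i" using g h by simp
  ultimately show "x \<in> orbit G i" unfolding orbit_def by blast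
qed

lemma orbit_eq: "perm_group Q0 G \<Longrightarrow> j \<in> orbit G i \<Longrightarrow> orbit G j = orbit G i"
  by (meson orbit_subset_of_mem orbit_sym subset_antisym)

lemma orbit_closed:
  assumes "perm_group Q0 G" "g \<in> G" "x \<in> orbit G i"
  shows "g x \<in> orbit G i"
proof -
  have "g x \<in> orbit G x" using assms(2) unfolding orbit_def by blast
  with assms show ?thesis using orbit_eq by metis
qed

lemma image_orbit:
  assumes G: "perm_group Q0 G" and g: "g \<in> G"
  shows "g ` orbit G i = orbit G i"
proof
  show "g ` orbit G i \<subseteq> orbit G i" using orbit_closed[OF G g] by blast
  show "orbit G i \<subseteq> g ` orbit G i"
  proof
    fix x assume x: "x \<in> orbit G i"
    have "inv g \<in> G" using G g by (simp add: perm_group_def)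
    then have "inv g x \<in> orbit G i" using orbit_closed[OF G _ x] by blast
    moreover have "g (inv g x) = x"
      using permutes_inverses(1)[OF perm_group_permutes[OF G g]] .
    ultimately show "x \<in> g ` orbit G i" by (metis image_eqI)
  qed
qed

definition null_on_orbits :: "'a set \<Rightarrow> ('a \<Rightarrow> 'a) set \<Rightarrow> 'a mat \<Rightarrow> bool" where
  "null_on_orbits Q0 G B \<longleftrightarrow> (\<forall>i\<in>Q0. \<forall>j\<in>orbit G i. B i j = 0)"

lemma null_on_orbits_orbit:
  assumes "perm_group Q0 G" "null_on_orbits Q0 G B" "k \<in> Q0"
  shows "\<forall>i\<in>orbit G k. \<forall>j\<in>orbit G k. B i j = 0"
proof (intro ballI)
  fix i j assume i: "i \<in> orbit G k" and j: "j \<in> orbit G k"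
  have "i \<in> Q0" using orbit_subset[OF assms(1,3)] i by blast
  moreover have "j \<in> orbit G i" using orbit_eq[OF assms(1) i] j by simp
  ultimately show "B i j = 0" using assms(2) by (simp add: null_on_orbits_def)
qed

lemma admissible_imp_null_on_orbits:
  assumes G: "perm_group Q0 G" and D: "skew_symmetrizer Q0 D B" and adm: "admissible Q0 B G"
  shows "null_on_orbits Q0 G B"
  unfolding null_on_orbits_def
proof (intro ballI)
  fix i j assume i: "i \<in> Q0" and j: "j \<in> orbit G i"
  have "j \<in> Q0" using orbit_subset[OF G i] j by blast
  have opposite: "sgn (B j i) = - sgn (B i j)" using skew_symmetrizer_sgn[OF D i \<open>j \<in> Q0\<close>] .
  show "B i j = 0"
  proof (cases "j = i")
    case True
    then show ?thesis using opposite by (simp add: sgn_0_0)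
  next
    case False
    have "i \<in> orbit G j" using orbit_sym[OF G j] .
    then have "B i j \<le> 0" "B j i \<le> 0"
      using adm i j \<open>j \<in> Q0\<close> False unfolding admissible_def by auto
    then show ?thesis using opposite by (auto simp: sgn_if split: if_splits)
  qed
qed

definition mutation_invariant :: "'a set \<Rightarrow> ('a \<Rightarrow> 'a) set \<Rightarrow> ('a \<Rightarrow> int) \<Rightarrow> 'a mat \<Rightarrow> bool" where
  "mutation_invariant Q0 G D B \<longleftrightarrow>
     skew_symmetrizer Q0 D B \<and> (\<forall>g\<in>G. is_automorphism Q0 B g) \<and> null_on_orbits Q0 G B"

locale single_nontrivial_orbit =
  fixes Q0 :: "'a::linorder set" and G :: "('a \<Rightarrow> 'a) set"
  assumes finite_Q0: "finite Q0"
    and perm_group: "perm_group Q0 G"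
    and nontrivial_orbit_unique: "\<forall>i\<in>Q0. \<forall>j\<in>Q0. card (orbit G i) > 1 \<and> card (orbit G j) > 1
            \<longrightarrow> orbit G i = orbit G j"
begin

lemma card_orbit_gt_1:
  assumes "i \<in> Q0" "j \<in> orbit G i" "j \<noteq> i"
  shows "card (orbit G i) > 1"
proof -
  have "finite (orbit G i)" using orbit_subset[OF perm_group assms(1)] finite_Q0 finite_subset by blast
  moreover have "{i, j} \<subseteq> orbit G i" using orbit_self[OF perm_group] assms(2) by blast
  ultimately have "card {i, j} \<le> card (orbit G i)" by (rule card_mono)
  then show ?thesis using assms(3) by simp
qed

lemma fixed_off_nontrivial_orbit:
  assumes i: "i \<in> Q0" "j \<in> orbit G i" "j \<noteq> i" and l: "l \<in> Q0" "l \<notin> orbit G i" and g: "g \<in> G"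
  shows "g l = l"
proof (rule ccontr)
  assume "g l \<noteq> l"
  moreover have "g l \<in> orbit G l" using g unfolding orbit_def by blast
  ultimately have "orbit G l = orbit G i"
    using nontrivial_orbit_unique card_orbit_gt_1 i l(1) by blast
  then show False using orbit_self[OF perm_group, of l] l(2) by simp
qed

lemma automorphic_entry_off_orbit:
  assumes aut: "\<forall>g\<in>G. is_automorphism Q0 B g"
    and i: "i \<in> Q0" "j \<in> orbit G i" and l: "l \<in> Q0" "l \<notin> orbit G i"
  shows "B j l = B i l"
proof (cases "j = i")
  case False
  obtain g where g: "g \<in> G" "j = g i" using i(2) unfolding orbit_def by blast
  have "g l = l" using fixed_off_nontrivial_orbit[OF i False l g(1)] .
  then show ?thesis using aut g i(1) l(1) unfolding is_automorphism_def by metis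
qed simp

lemma null_on_orbits_orbit_mut:
  assumes D: "skew_symmetrizer Q0 D B" and aut: "\<forall>g\<in>G. is_automorphism Q0 B g"
    and null: "null_on_orbits Q0 G B" and k: "k \<in> Q0"
  shows "null_on_orbits Q0 G (orbit_mut (orbit G k) B)"
  unfolding null_on_orbits_def
proof (intro ballI)
  fix i j assume i: "i \<in> Q0" and j: "j \<in> orbit G i"
  have "j \<in> Q0" using orbit_subset[OF perm_group i] j by blast
  have S: "orbit G k \<subseteq> Q0" using orbit_subset[OF perm_group k] .
  have "mutation_term (B i l) (B l j) = 0" if l: "l \<in> orbit G k" and "i \<notin> orbit G k" for l
  proof -
    have "l \<notin> orbit G i"
    proof
      assume "l \<in> orbit G i"
      then have "orbit G i = orbit G k"
        using orbit_eq[OF perm_group] l by metis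
      then show False using orbit_self[OF perm_group, of i] \<open>i \<notin> orbit G k\<close> by simp
    qed
    then have "B j l = B i l" using automorphic_entry_off_orbit[OF aut i j] S l by blast
    then have "sgn (B l j) = - sgn (B i l)"
      using skew_symmetrizer_sgn[OF D \<open>j \<in> Q0\<close>] S l by auto
    then show ?thesis by (rule mutation_term_opposite_sgn)
  qed
  then have "i \<notin> orbit G k \<Longrightarrow> (\<Sum>l\<in>orbit G k. mutation_term (B i l) (B l j)) = 0"
    by simp
  moreover have "B i j = 0" using null i j by (simp add: null_on_orbits_def)
  moreover have "finite (orbit G k)" using S finite_Q0 finite_subset by blast
  ultimately show "orbit_mut (orbit G k) B i j = 0"
    using orbit_mut_apply[OF _ null_on_orbits_orbit[OF perm_group null k]] by simp
qed

lemma mutation_invariant_orbit_mut: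
  assumes inv: "mutation_invariant Q0 G D B" and k: "k \<in> Q0"
  shows "mutation_invariant Q0 G D (orbit_mut (orbit G k) B)"
proof -
  have D: "skew_symmetrizer Q0 D B" and aut: "\<forall>g\<in>G. is_automorphism Q0 B g"
    and null: "null_on_orbits Q0 G B"
    using inv unfolding mutation_invariant_def by blast+
  have S: "orbit G k \<subseteq> Q0" using orbit_subset[OF perm_group k] .
  then have "finite (orbit G k)" using finite_Q0 finite_subset by blast
  note null_S = null_on_orbits_orbit[OF perm_group null k]
  have "is_automorphism Q0 (orbit_mut (orbit G k) B) g" if "g \<in> G" for g
    using is_automorphism_orbit_mut[OF _ \<open>finite (orbit G k)\<close> S image_orbit[OF perm_group that] null_S]
      aut that by blast
  then show ?thesis
    using skew_symmetrizer_orbit_mut[OF D \<open>finite (orbit G k)\<close> S]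
      null_on_orbits_orbit_mut[OF D aut null k]
    unfolding mutation_invariant_def by blast
qed

lemma mutation_invariant_orbit_mut_seq:
  "set is \<subseteq> Q0 \<Longrightarrow> mutation_invariant Q0 G D B \<Longrightarrow> mutation_invariant Q0 G D (orbit_mut_seq G is B)"
proof (induction "is" arbitrary: B)
  case Nil
  then show ?case by (simp add: orbit_mut_seq_def)
next
  case (Cons k ks)
  then have "mutation_invariant Q0 G D (orbit_mut_seq G ks (orbit_mut (orbit G k) B))"
    using mutation_invariant_orbit_mut by simp
  then show ?case by (simp add: orbit_mut_seq_def)
qed

lemma admissible_if_mutation_invariant:
  assumes "mutation_invariant Q0 G D B"
  shows "admissible Q0 B G"
proof -
  have D: "skew_symmetrizer Q0 D B" and aut: "\<forall>g\<in>G. is_automorphism Q0 B g"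
    and null: "null_on_orbits Q0 G B"
    using assms unfolding mutation_invariant_def by blast+
  have no_path: "\<not> (\<exists>m\<in>Q0. B i m > 0 \<and> B m j > 0)" if i: "i \<in> Q0" "j \<in> orbit G i" for i j
  proof
    assume "\<exists>m\<in>Q0. B i m > 0 \<and> B m j > 0"
    then obtain m where m: "m \<in> Q0" and path: "B i m > 0" "B m j > 0" by blast
    have "j \<in> Q0" using orbit_subset[OF perm_group i(1)] i(2) by blast
    have "m \<notin> orbit G i" using null i(1) path(1) unfolding null_on_orbits_def by force
    then have "B j m = B i m" using automorphic_entry_off_orbit[OF aut i m] by simp
    then have "sgn (B m j) = - sgn (B i m)"
      using skew_symmetrizer_sgn[OF D \<open>j \<in> Q0\<close> m] by simp
    then show False using path by simp
  qed
  have "B i j \<le> 0" if "i \<in> Q0" "j \<in> orbit G i" for i j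
    using null that unfolding null_on_orbits_def by simp
  with aut no_path show ?thesis unfolding admissible_def by blast
qed

end

theorem mainTheorem12:
  fixes Q0 :: "'a::linorder set" and A :: "'a mat" and G :: "('a \<Rightarrow> 'a) set"
  assumes "finite Q0"
    and "skew_symmetrizable Q0 A"
    and "perm_group Q0 G"
    and "admissible Q0 A G"
    and "\<forall>i\<in>Q0. \<forall>j\<in>Q0. card (orbit G i) > 1 \<and> card (orbit G j) > 1
            \<longrightarrow> orbit G i = orbit G j"
  shows "stable Q0 A G"
proof -
  interpret single_nontrivial_orbit Q0 G
    using assms(1,3,5) by unfold_locales
  obtain D where D: "skew_symmetrizer Q0 D A"
    using assms(2) by (auto simp: skew_symmetrizable_iff)
  have "mutation_invariant Q0 G D A"
    using D assms(4) admissible_imp_null_on_orbits[OF assms(3) D]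
    unfolding mutation_invariant_def admissible_def by blast
  then show ?thesis
    unfolding stable_def
    by (blast intro: admissible_if_mutation_invariant mutation_invariant_orbit_mut_seq)
qed

end
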